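(* Let $q=2^s$, $s\ge1$, and let $C_2\subseteq C_1\subseteq\mathbb F_q^n$ be $\mathbb F_q$-linear codes forming a $q$-ary CSS-$T$ pair. Then the binary code $\mathrm{tr}(C_2)\subseteq\mathbb F_2^n$ is self-orthogonal, i.e. $\mathrm{tr}(C_2)\subseteq\mathrm{tr}(C_2)^\perp$.
   Context: Let $q=2^s$ and $\mathrm{tr}:\mathbb F_q\to\mathbb F_2$, $\mathrm{tr}(x)=\sum_{i=0}^{s-1}x^{2^i}$, the absolute trace; for $c\in\mathbb F_q^n$, $\mathrm{tr}(c)=(\mathrm{tr}(c_1),\dots,\mathrm{tr}(c_n))$, and for a linear code $C$, $\mathrm{tr}(C)=\{\mathrm{tr}(c):c\in C\}\subseteq\mathbb F_2^n$. $^\perp$ is the dual for the standard inner product. Let $\mathcal H=\mathbb C^q$ with orthonormal basis $\{|x\rangle:x\in\mathbb F_q\}$ and $\mathcal H^{\otimes n}$ with basis $|x\rangle=|x_1\rangle\otimes\cdots\otimes|x_n\rangle$, $x\in\mathbb F_q^n$. For $\lambda\in\mathbb F_q$, $T^{(\lambda)}=\sum_{x\in\mathbb F_q}e^{i\pi\,\mathrm{tr}(\lambda x)/4}|x\rangle\langle x|$, where $\mathrm{tr}(\lambda x)\in\{0,1\}$ is regarded as an integer; $T=T^{(1)}$. For $\mathbb F_q$-linear codes $C_2\subseteq C_1\subseteq\mathbb F_q^n$, the CSS code $\mathrm{CSS}(C_1,C_2)\subseteq\mathcal H^{\otimes n}$ is the complex linear span of the states $|w+C_2\rangle=|C_2|^{-1/2}\sum_{c\in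 C_2}|w+c\rangle$ for $w\in C_1$. The pair $(C_1,C_2)$ is a $q$-ary CSS-$T$ pair if $(T^{(\lambda)})^{\otimes n}$ maps $\mathrm{CSS}(C_1,C_2)$ into itself for every $\lambda\in\mathbb F_q$. *)

theory Defs
  imports "HOL-Analysis.Analysis" "HOL-Library.Z2"
begin

text \<open>Finite field F_q, q = 2^s, is a type 'a :: {field, finite} with CARD('a) = 2^s.
  Vectors of length n are 'a^'n with 'n a finite index type of cardinality n.\<close>

text \<open>Absolute trace tr(x) = sum_{i<s} x^(2^i), computed in F_q (its values lie in {0,1}).\<close>
definition abs_trace :: "nat \<Rightarrow> 'a::field \<Rightarrow> 'a" where
  "abs_trace s x = (\<Sum>i<s. x ^ (2 ^ i))"

definition trace_int :: "nat \<Rightarrow> 'a::field \<Rightarrow> int" where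
  "trace_int s x = (if abs_trace s x = 0 then 0 else 1)"

definition trace_bit :: "nat \<Rightarrow> 'a::field \<Rightarrow> bit" where
  "trace_bit s x = (if abs_trace s x = 0 then 0 else 1)"

definition linear_code :: "('a::field ^ 'n) set \<Rightarrow> bool" where
  "linear_code C \<longleftrightarrow> 0 \<in> C \<and> (\<forall>x\<in>C. \<forall>y\<in>C. x + y \<in> C) \<and> (\<forall>c. \<forall>x\<in>C. c *s x \<in> C)"

definition trace_vec :: "nat \<Rightarrow> 'a::field ^ 'n \<Rightarrow> bit ^ 'n" where
  "trace_vec s c = (\<chi> i. trace_bit s (c $ i))"

definition trace_code :: "nat \<Rightarrow> ('a::field ^ 'n) set \<Rightarrow> (bit ^ 'n) set" where
  "trace_code s C = trace_vec s ` C"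

definition dual_code :: "('b::comm_ring_1 ^ 'n::finite) set \<Rightarrow> ('b ^ 'n) set" where
  "dual_code C = {v. \<forall>c\<in>C. (\<Sum>i\<in>UNIV. v $ i * c $ i) = 0}"

text \<open>States of H^{\<otimes>n}: functions F_q^n \<Rightarrow> complex (coefficients in the basis |x>).
  Coset state |w + C2> = |C2|^{-1/2} \<Sum>_{c\<in>C2} |w + c>.\<close>
definition coset_state :: "('a::field ^ 'n) set \<Rightarrow> 'a ^ 'n \<Rightarrow> ('a ^ 'n \<Rightarrow> complex)" where
  "coset_state C2 w = (\<lambda>x. \<Sum>c\<in>C2. (if x = w + c then 1 / sqrt (real (card C2)) else 0))"

text \<open>CSS(C1,C2): complex linear span of the coset states |w + C2>, w \<in> C1
  (C1 finite, so the span is the set of all linear combinations indexed by C1).\<close>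
definition css_code :: "('a::{field,finite} ^ 'n::finite) set \<Rightarrow> ('a ^ 'n) set \<Rightarrow> ('a ^ 'n \<Rightarrow> complex) set" where
  "css_code C1 C2 = {\<psi>. \<exists>a :: 'a ^ 'n \<Rightarrow> complex. \<psi> = (\<lambda>x. \<Sum>w\<in>C1. a w * coset_state C2 w x)}"

definition T_tensor :: "nat \<Rightarrow> 'a::field \<Rightarrow> ('a ^ 'n::finite \<Rightarrow> complex) \<Rightarrow> ('a ^ 'n \<Rightarrow> complex)" where
  "T_tensor s lam \<psi> = (\<lambda>x. (\<Prod>i\<in>UNIV. exp (\<i> * of_real pi * of_int (trace_int s (lam * x $ i)) / 4)) * \<psi> x)"

definition css_T_pair :: "nat \<Rightarrow> ('a::{field,finite} ^ 'n::finite) set \<Rightarrow> ('a ^ 'n) set \<Rightarrow> bool" where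
  "css_T_pair s C1 C2 \<longleftrightarrow> (\<forall>lam. \<forall>\<psi>\<in>css_code C1 C2. T_tensor s lam \<psi> \<in> css_code C1 C2)"

end

theory Submission
  imports Defs "HOL-Number_Theory.Residues"
begin

(*
  Let c \<in> C2. The coset state |C2\<rangle> lies in CSS(C1, C2), and T^{\<otimes>n} multiplies its
  coefficient at c by exp(i\<pi> wt(tr c)/4) while fixing its coefficient at 0. Every state of
  CSS(C1, C2) is invariant under translation by C2, so this phase is 1 and 8 divides the Hamming
  weight wt(tr c). In characteristic 2 the trace is additive, whence
  wt(tr(c + d)) = wt(tr c) + wt(tr d) - 2 |supp tr c \<inter> supp tr d|; so the overlap of the
  supports, which is the inner product of tr c and tr d modulo 2, is even.
*)

lemma CHAR_eq_2_if_card_power_2: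
  assumes "CARD('a::{field,finite}) = 2 ^ s"
  shows "CHAR('a) = 2"
proof -
  have prime: "prime CHAR('a)"
    by (rule prime_CHAR_semidom) (simp add: finite_imp_CHAR_pos)
  have "CHAR('a) dvd 2 ^ s"
    using CHAR_dvd_CARD[where 'a='a] assms by simp
  then have "CHAR('a) dvd 2"
    using prime prime_dvd_power by blast
  then have "CHAR('a) \<le> 2"
    by (rule dvd_imp_le) simp
  moreover have "CHAR('a) > 1"
    using prime by (rule prime_gt_1_nat)
  ultimately show ?thesis
    by linarith
qed

lemma power_card_eq_self: "x ^ CARD('a) = (x::'a::{field,finite})"
proof (cases "x = 0")
  case False
  let ?U = "UNIV - {0::'a}"
  have "(\<Prod>y\<in>?U. x * y) = (\<Prod>y\<in>?U. y)"
    by (rule prod.reindex_bij_witness[of _ "\<lambda>y. y / x" "\<lambda>y. x * y"]) (use False in auto)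
  then have "x ^ card ?U = 1"
    by (simp add: prod.distrib prod_zero_iff)
  moreover have "CARD('a) = Suc (card ?U)"
    using finite_UNIV_card_ge_0[where 'a='a] by (simp add: card_Diff_singleton)
  ultimately show ?thesis
    by (metis power_Suc mult_1_right)
qed simp

lemma abs_trace_add:
  assumes "CHAR('a::field) = 2"
  shows "abs_trace s (x + y) = abs_trace s x + abs_trace s (y::'a)"
proof -
  have "(x + y) ^ 2 ^ i = x ^ 2 ^ i + y ^ 2 ^ i" for i
    by (rule freshmans_dream') (simp_all add: assms)
  then show ?thesis
    unfolding abs_trace_def by (simp add: sum.distrib)
qed

lemma abs_trace_0_or_1:
  assumes "CARD('a::{field,finite}) = 2 ^ s"
  shows "abs_trace s x = 0 \<or> abs_trace s (x::'a) = 1"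
proof -
  have char: "CHAR('a) = 2"
    using assms by (rule CHAR_eq_2_if_card_power_2)
  have "abs_trace s x ^ 2 = (\<Sum>i<s. (x ^ 2 ^ i) ^ 2)"
    unfolding abs_trace_def by (rule freshmans_dream_sum) (simp_all add: char)
  also have "\<dots> = (\<Sum>i<s. x ^ 2 ^ Suc i)"
    by (simp add: power_mult[symmetric] mult.commute)
  also have "\<dots> = abs_trace s x"
    using sum.lessThan_Suc_shift[of "\<lambda>i. x ^ 2 ^ i" s] sum.lessThan_Suc[of "\<lambda>i. x ^ 2 ^ i" s]
    by (simp add: abs_trace_def power_card_eq_self flip: assms)
  finally have "abs_trace s x * (abs_trace s x - 1) = 0"
    by (simp add: power2_eq_square algebra_simps)
  then show ?thesis
    by simp
qed

lemma trace_int_add: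
  assumes "CARD('a::{field,finite}) = 2 ^ s"
  shows "trace_int s (x + y) = trace_int s x + trace_int s y - 2 * trace_int s x * trace_int s (y::'a)"
proof -
  have char: "CHAR('a) = 2"
    using assms by (rule CHAR_eq_2_if_card_power_2)
  then have "(1::'a) + 1 = 0"
    by (metis of_nat_CHAR one_add_one of_nat_numeral)
  then show ?thesis
    using abs_trace_add[OF char, of s x y] abs_trace_0_or_1[OF assms, of x] abs_trace_0_or_1[OF assms, of y]
    unfolding trace_int_def by auto
qed

definition trace_weight :: "nat \<Rightarrow> 'a::field ^ 'n::finite \<Rightarrow> int" where
  "trace_weight s c = (\<Sum>i\<in>UNIV. trace_int s (c $ i))"

lemma trace_weight_add:
  fixes c d :: "'a::{field,finite} ^ 'n::finite"
  assumes "CARD('a) = 2 ^ s"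
  shows "trace_weight s (c + d) = trace_weight s c + trace_weight s d
    - 2 * (\<Sum>i\<in>UNIV. trace_int s (c $ i) * trace_int s (d $ i))"
  unfolding trace_weight_def
  by (simp add: trace_int_add[OF assms] sum.distrib sum_subtractf sum_distrib_left mult.assoc)

lemma trace_vec_inner_eq_0:
  fixes c d :: "'a::{field,finite} ^ 'n::finite"
  assumes "CARD('a) = 2 ^ s"
    and "4 dvd trace_weight s c" "4 dvd trace_weight s d" "4 dvd trace_weight s (c + d)"
  shows "(\<Sum>i\<in>UNIV. trace_vec s c $ i * trace_vec s d $ i) = 0"
proof -
  define overlap where "overlap = (\<Sum>i\<in>UNIV. trace_int s (c $ i) * trace_int s (d $ i))"
  have "2 * overlap = trace_weight s c + trace_weight s d - trace_weight s (c + d)"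
    using trace_weight_add[OF assms(1), of c d] unfolding overlap_def by simp
  then have "4 dvd 2 * overlap"
    using assms(2-4) by (simp add: dvd_add dvd_diff)
  then obtain k where "overlap = 2 * k"
    by auto
  moreover have "(\<Sum>i\<in>UNIV. trace_vec s c $ i * trace_vec s d $ i) = of_int overlap"
    unfolding overlap_def trace_vec_def by (simp add: trace_bit_def trace_int_def)
  ultimately show ?thesis
    by simp
qed

lemma exp_i_pi_quarter_eq_1_iff: "exp (\<i> * pi * of_int k / 4) = 1 \<longleftrightarrow> 8 dvd k"
proof -
  have "exp (\<i> * pi * of_int k / 4) = 1 \<longleftrightarrow> (\<exists>m::int. pi * k / 4 = 2 * m * pi)"
    by (simp add: exp_eq_1)
  also have "\<dots> \<longleftrightarrow> (\<exists>m::int. real_of_int k = real_of_int (8 * m))"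
    by (simp add: field_simps)
  also have "\<dots> \<longleftrightarrow> (\<exists>m::int. k = 8 * m)"
    by (simp only: of_int_eq_iff)
  finally show ?thesis
    by (simp add: dvd_def)
qed

lemma T_tensor_apply:
  "T_tensor s lam \<psi> x = exp (\<i> * pi * of_int (trace_weight s (lam *s x)) / 4) * \<psi> x"
proof -
  have "(\<Prod>i\<in>UNIV. exp (\<i> * pi * of_int (trace_int s (lam * x $ i)) / 4))
      = exp (\<Sum>i\<in>UNIV. \<i> * pi * of_int (trace_int s (lam * x $ i)) / 4)"
    by (simp add: exp_sum)
  also have "(\<Sum>i\<in>UNIV. \<i> * pi * of_int (trace_int s (lam * x $ i)) / 4)
      = \<i> * pi * of_int (trace_weight s (lam *s x)) / 4"
    unfolding trace_weight_def by (simp add: sum_divide_distrib sum_distrib_left)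
  finally show ?thesis
    unfolding T_tensor_def by simp
qed

lemma linear_code_add_iff:
  assumes "linear_code C" and "c \<in> C"
  shows "x + c \<in> C \<longleftrightarrow> x \<in> C"
proof
  have "(-1) *s c \<in> C"
    using assms unfolding linear_code_def by blast
  moreover assume "x + c \<in> C"
  ultimately have "(x + c) + (-1) *s c \<in> C"
    using assms(1) unfolding linear_code_def by blast
  then show "x \<in> C"
    by (simp add: vec_eq_iff)
next
  assume "x \<in> C"
  then show "x + c \<in> C"
    using assms unfolding linear_code_def by blast
qed

lemma coset_state_apply:
  assumes "finite C"
  shows "coset_state C w x = (if x - w \<in> C then 1 / sqrt (real (card C)) else 0)"
proof -
  have "coset_state C w x = (\<Sum>c\<in>C. if c = x - w then complex_of_real (1 / sqrt (real (card C))) else 0)"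
    unfolding coset_state_def of_real_sum by (rule sum.cong) (auto simp: algebra_simps)
  also have "\<dots> = (if x - w \<in> C then complex_of_real (1 / sqrt (real (card C))) else 0)"
    using assms by (rule sum.delta)
  finally show ?thesis
    by simp
qed

lemma coset_state_in_css_code:
  assumes "w \<in> C1"
  shows "coset_state C2 w \<in> css_code C1 C2"
  unfolding css_code_def
proof (intro CollectI exI[of _ "\<lambda>v. if v = w then 1 else 0"] ext)
  fix x
  have "(\<Sum>v\<in>C1. (if v = w then 1 else 0) * coset_state C2 v x)
      = (\<Sum>v\<in>C1. if v = w then coset_state C2 v x else 0)"
    by (rule sum.cong) auto
  also have "\<dots> = coset_state C2 w x"
    using assms by (simp add: sum.delta')
  finally show "coset_state C2 w x = (\<Sum>v\<in>C1. (if v = w then 1 else 0) * coset_state C2 v x)"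
    by simp
qed

lemma css_code_translation_invariant:
  assumes "linear_code C2" and "\<psi> \<in> css_code C1 C2" and "c \<in> C2"
  shows "\<psi> (x + c) = \<psi> x"
proof -
  have "x + c - w \<in> C2 \<longleftrightarrow> x - w \<in> C2" for w
    using linear_code_add_iff[OF assms(1,3), of "x - w"] by (simp add: algebra_simps)
  then show ?thesis
    using assms(2) unfolding css_code_def by (auto simp: coset_state_apply)
qed

lemma css_T_pair_trace_weight_dvd_8:
  fixes C1 C2 :: "('a::{field,finite} ^ 'n::finite) set"
  assumes "linear_code C1" and "linear_code C2" and "css_T_pair s C1 C2" and "c \<in> C2"
  shows "8 dvd trace_weight s c"
proof -
  let ?\<psi> = "coset_state C2 0"
  have zero: "0 \<in> C1" "0 \<in> C2"
    using assms(1,2) unfolding linear_code_def by auto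
  then have "?\<psi> \<in> css_code C1 C2"
    by (intro coset_state_in_css_code)
  then have "T_tensor s 1 ?\<psi> \<in> css_code C1 C2"
    using assms(3) unfolding css_T_pair_def by blast
  then have "T_tensor s 1 ?\<psi> (0 + c) = T_tensor s 1 ?\<psi> 0"
    by (rule css_code_translation_invariant[OF assms(2) _ assms(4)])
  moreover have "trace_weight s (0::'a ^ 'n) = 0"
    by (simp add: trace_weight_def trace_int_def abs_trace_def power_0_left)
  moreover have "?\<psi> c = ?\<psi> 0" "?\<psi> 0 \<noteq> 0"
    using zero assms(4) by (auto simp: coset_state_apply card_gt_0_iff)
  ultimately have "exp (\<i> * pi * of_int (trace_weight s c) / 4) = 1"
    by (simp add: T_tensor_apply)
  then show ?thesis
    by (simp add: exp_i_pi_quarter_eq_1_iff)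
qed

theorem mainTheorem6:
  fixes C1 C2 :: "('a::{field,finite} ^ 'n::finite) set" and s :: nat
  assumes "s \<ge> 1" and "CARD('a) = 2 ^ s"
    and "linear_code C1" and "linear_code C2" and "C2 \<subseteq> C1"
    and "css_T_pair s C1 C2"
  shows "trace_code s C2 \<subseteq> dual_code (trace_code s C2)"
proof
  fix v assume "v \<in> trace_code s C2"
  then obtain c where "c \<in> C2" and v: "v = trace_vec s c"
    unfolding trace_code_def by blast
  have weight_dvd: "4 dvd trace_weight s x" if "x \<in> C2" for x
    using css_T_pair_trace_weight_dvd_8[OF assms(3,4,6) that] by (rule dvd_trans[rotated]) simp
  have "(\<Sum>i\<in>UNIV. v $ i * trace_vec s d $ i) = 0" if "d \<in> C2" for d
  proof -
    have "c + d \<in> C2"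
      using \<open>c \<in> C2\<close> \<open>d \<in> C2\<close> assms(4) unfolding linear_code_def by blast
    with \<open>c \<in> C2\<close> \<open>d \<in> C2\<close> show ?thesis
      unfolding v by (intro trace_vec_inner_eq_0[OF assms(2)] weight_dvd)
  qed
  then show "v \<in> dual_code (trace_code s C2)"
    unfolding dual_code_def trace_code_def by blast
qed

end
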